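(* Let $(V,g)$ be a real vector space of dimension $n\ge3$ with a non-degenerate scalar product $g$ (of arbitrary signature). Let $R\in\mathfrak{r}(V)$ with $R^*\in\mathfrak{r}(V)$. Then: (1) $\pi_8(R)=0=\pi_8(R^* )$; (2) $Ric(R)$ is symmetric if and only if $Ric^*(R)$ is symmetric.
   Context: $\mathfrak{r}(V)$ is the space of $(0,4)$-tensors $R$ with $R(x,y,z,w)=-R(y,x,z,w)$ and $R(x,y,z,w)+R(y,z,x,w)+R(z,x,y,w)=0$. The conjugate of a $(0,4)$-tensor is $R^*(x,y,z,w):=-R(x,y,w,z)$. With $\{e_i\}$ a basis, $g_{ij}=g(e_i,e_j)$ and $(g^{ij})$ the inverse matrix (summation convention), $Ric(R)(x,y):=g^{ij}R(e_i,x,y,e_j)$ and $Ric^*(R):=Ric(R^* )$. For bilinear forms $h,k$: $\Lambda h(x,y)=\tfrac12[h(x,y)-h(y,x)]$; $(h\cdot k)(x,y,z,w)=h(x,y)k(z,w)$; $(h\wedge_r k)(x,y,z,w)=h(x,z)k(y,w)-h(y,z)k(x,w)-r[h(x,w)k(y,z)-h(y,w)k(x,z)]$. Define $4\psi(R)(x,y,z,w)=R(x,y,z,w)+R(y,x,w,z)+R(z,w,x,y)+R(w,z,y,x)$ and $8\mu(R)(x,y,z,w)=3R(x,y,z,w)+3R(x,y,w,z)+R(x,w,z,y)+R(x,z,w,y)+R(w,y,z,x)+R(z,y,w,x)$. For $R\in\mathfrak{r}(V)$ put $\pi_8(R):=R-\psi(R)-\mu(R)+\tfrac{1}{2(n-2)}\Lambda(Ric(R)+Ric^*(R))\cdot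 g+\tfrac{1}{4(n-2)}\Lambda(Ric(R)+Ric^*(R))\wedge_3 g$. *)

theory Defs
  imports "HOL-Analysis.Analysis"
begin

text \<open>Coordinate representation: V = R^n with basis e_i indexed by the finite type 'n
  (n = CARD('n)).  A (0,4)-tensor R is given by its components R(e_i,e_j,e_k,e_l);
  a bilinear form h by its components h(e_i,e_j); the scalar product g by its Gram matrix
  g_ij = g $ i $ j.  All identities in question are multilinear, so they hold for all
  vectors iff they hold on basis vectors.\<close>

type_synonym 'n tensor4 = "'n \<Rightarrow> 'n \<Rightarrow> 'n \<Rightarrow> 'n \<Rightarrow> real"
type_synonym 'n bform = "'n \<Rightarrow> 'n \<Rightarrow> real"

definition in_r :: "'n tensor4 \<Rightarrow> bool" where
  "in_r R \<longleftrightarrow> (\<forall>x y z w. R x y z w = - R y x z w \<and>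
                         R x y z w + R y z x w + R z x y w = 0)"

definition conj4 :: "'n tensor4 \<Rightarrow> 'n tensor4" where
  "conj4 R = (\<lambda>x y z w. - R x y w z)"

definition Ric :: "real^'n^'n \<Rightarrow> ('n::finite) tensor4 \<Rightarrow> 'n bform" where
  "Ric g R = (\<lambda>x y. \<Sum>i\<in>UNIV. \<Sum>j\<in>UNIV. matrix_inv g $ i $ j * R i x y j)"

definition Ric_star :: "real^'n^'n \<Rightarrow> ('n::finite) tensor4 \<Rightarrow> 'n bform" where
  "Ric_star g R = Ric g (conj4 R)"

definition Lam :: "'n bform \<Rightarrow> 'n bform" where
  "Lam h = (\<lambda>x y. (h x y - h y x) / 2)"

definition dotp :: "'n bform \<Rightarrow> 'n bform \<Rightarrow> 'n tensor4" where
  "dotp h k = (\<lambda>x y z w. h x y * k z w)"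

definition wedge :: "real \<Rightarrow> 'n bform \<Rightarrow> 'n bform \<Rightarrow> 'n tensor4" where
  "wedge r h k = (\<lambda>x y z w. h x z * k y w - h y z * k x w - r * (h x w * k y z - h y w * k x z))"

definition psi :: "'n tensor4 \<Rightarrow> 'n tensor4" where
  "psi R = (\<lambda>x y z w. (R x y z w + R y x w z + R z w x y + R w z y x) / 4)"

definition mu :: "'n tensor4 \<Rightarrow> 'n tensor4" where
  "mu R = (\<lambda>x y z w. (3 * R x y z w + 3 * R x y w z + R x w z y + R x z w y
                       + R w y z x + R z y w x) / 8)"

definition gram :: "real^'n^'n \<Rightarrow> 'n bform" where
  "gram g = (\<lambda>i j. g $ i $ j)"

definition pi8 :: "real^'n^'n \<Rightarrow> ('n::finite) tensor4 \<Rightarrow> 'n tensor4" where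
  "pi8 g R = (let n = real CARD('n); A = Lam (\<lambda>x y. Ric g R x y + Ric_star g R x y) in
     (\<lambda>x y z w. R x y z w - psi R x y z w - mu R x y z w
        + 1 / (2 * (n - 2)) * dotp A (gram g) x y z w
        + 1 / (4 * (n - 2)) * wedge 3 A (gram g) x y z w))"

definition sym_bform :: "'n bform \<Rightarrow> bool" where
  "sym_bform h \<longleftrightarrow> (\<forall>x y. h x y = h y x)"

end

theory Submission
  imports Defs
begin

text \<open>Then \<open>S = R + R\<^sup>*\<close>, i.e. \<open>S(x,y,z,w) = R(x,y,z,w) - R(x,y,w,z)\<close>, satisfies the pair symmetry
  \<open>S(x,y,z,w) = S(w,z,y,x)\<close>, so its Ricci contraction \<open>Ric(R) + Ric\<^sup>*(R)\<close> is symmetric.  Hence the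
  correction terms of \<open>\<pi>\<^sub>8\<close>, built from \<open>\<Lambda>(Ric(R) + Ric\<^sup>*(R))\<close>, vanish, and \<open>R - \<psi>(R) - \<mu>(R) = 0\<close>
  is a linear consequence of the two Bianchi identities.  Symmetry of \<open>Ric(R) + Ric\<^sup>*(R)\<close> also shows
  that \<open>Ric(R)\<close> is symmetric iff \<open>Ric\<^sup>*(R)\<close> is.\<close>

lemma transpose_matrix_inv_symmetric:
  fixes A :: "'a::comm_semiring_1^'n^'n"
  assumes "transpose A = A" and "invertible A"
  shows "transpose (matrix_inv A) = matrix_inv A"
proof -
  define B where "B = matrix_inv A"
  have B: "A ** B = mat 1" "B ** A = mat 1"
    using someI_ex[OF assms(2)[unfolded invertible_def]] by (auto simp: B_def matrix_inv_def)
  have "A ** transpose B = mat 1"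
    by (metis assms(1) B(2) matrix_transpose_mul transpose_mat)
  then have "B = B ** (A ** transpose B)"
    by (simp add: matrix_mul_rid)
  also have "\<dots> = transpose B"
    using B(2) by (simp add: matrix_mul_assoc matrix_mul_lid)
  finally show ?thesis
    unfolding B_def by simp
qed

lemma matrix_inv_symmetric:
  fixes A :: "'a::comm_semiring_1^'n^'n"
  assumes "transpose A = A" and "invertible A"
  shows "matrix_inv A $ i $ j = matrix_inv A $ j $ i"
proof -
  have "transpose (matrix_inv A) $ j $ i = matrix_inv A $ j $ i"
    by (simp add: transpose_matrix_inv_symmetric[OF assms])
  then show ?thesis
    by (simp add: transpose_def)
qed

lemma conj4_conj4 [simp]: "conj4 (conj4 R) = R"
  by (simp add: conj4_def)

lemma in_r_antisym: "in_r R \<Longrightarrow> R x y z w = - R y x z w"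
  unfolding in_r_def by blast

lemma in_r_bianchi: "in_r R \<Longrightarrow> R x y z w + R y z x w + R z x y w = 0"
  unfolding in_r_def by blast

lemma in_r_conj4_bianchi: "in_r (conj4 R) \<Longrightarrow> R x y w z + R y z w x + R z x w y = 0"
  using in_r_bianchi[of "conj4 R" x y z w] by (simp add: conj4_def)

lemma Ric_add: "Ric g (\<lambda>a b c d. R a b c d + T a b c d) x y = Ric g R x y + Ric g T x y"
  by (simp add: Ric_def distrib_left sum.distrib)

lemma Ric_symmetric_if_pair_symmetric:
  fixes g :: "real^'n^'n" and S :: "('n::finite) tensor4"
  assumes "transpose g = g" and "invertible g"
    and pair_sym: "\<And>a b c d. S a b c d = S d c b a"
  shows "Ric g S x y = Ric g S y x"
proof -
  have "matrix_inv g $ i $ j * S i x y j = matrix_inv g $ j $ i * S j y x i" for i j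
    using pair_sym matrix_inv_symmetric[OF assms(1,2)] by metis
  then have "Ric g S x y = (\<Sum>i\<in>UNIV. \<Sum>j\<in>UNIV. matrix_inv g $ j $ i * S j y x i)"
    unfolding Ric_def by (intro sum.cong refl)
  also have "\<dots> = Ric g S y x"
    unfolding Ric_def by (rule sum.swap)
  finally show ?thesis .
qed

lemma skew_part_pair_symmetric:
  assumes "in_r R" and "in_r (conj4 R)"
  shows "R a b c d - R a b d c = R d c b a - R d c a b"
proof -
  note antisym = in_r_antisym[OF assms(1)]
    and bianchi = in_r_bianchi[OF assms(1)]
    and bianchi' = in_r_conj4_bianchi[OF assms(2)]
  show ?thesis
    using antisym[of a b c d] bianchi'[of a b d c] antisym[of a c b d] bianchi'[of a c b d]
      antisym[of a d b c] bianchi'[of a d c b] bianchi[of a d c b] bianchi'[of a d b c]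
      bianchi[of b c d a]
    by linarith
qed

lemma Ric_plus_Ric_star_symmetric:
  fixes g :: "real^'n^'n" and R :: "('n::finite) tensor4"
  assumes "transpose g = g" and "invertible g" and "in_r R" and "in_r (conj4 R)"
  shows "Ric g R x y + Ric_star g R x y = Ric g R y x + Ric_star g R y x"
proof -
  have "\<And>x y. Ric g R x y + Ric_star g R x y = Ric g (\<lambda>a b c d. R a b c d - R a b d c) x y"
    unfolding Ric_star_def using Ric_add[of g R "conj4 R"] by (simp add: conj4_def)
  moreover have "Ric g (\<lambda>a b c d. R a b c d - R a b d c) x y
      = Ric g (\<lambda>a b c d. R a b c d - R a b d c) y x"
    by (rule Ric_symmetric_if_pair_symmetric[OF assms(1,2)])
      (rule skew_part_pair_symmetric[OF assms(3,4)])
  ultimately show ?thesis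
    by simp
qed

lemma psi_plus_mu_eq:
  assumes "in_r R" and "in_r (conj4 R)"
  shows "psi R x y z w + mu R x y z w = R x y z w"
proof -
  note antisym = in_r_antisym[OF assms(1)]
    and bianchi = in_r_bianchi[OF assms(1)]
    and bianchi' = in_r_conj4_bianchi[OF assms(2)]
  show ?thesis
    unfolding psi_def mu_def
    using antisym[of x y z w] bianchi'[of x y w z] antisym[of x y w z] antisym[of x z y w]
      bianchi'[of x z w y] antisym[of x z w y] bianchi[of x z w y] bianchi'[of x z y w]
      antisym[of x w y z] bianchi'[of x w z y] antisym[of x w z y] bianchi'[of x w y z]
      bianchi[of y z w x]
    by (simp add: field_simps)
qed

lemma pi8_eq_zero:
  fixes g :: "real^'n^'n" and R :: "('n::finite) tensor4"
  assumes "transpose g = g" and "invertible g" and "in_r R" and "in_r (conj4 R)"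
  shows "pi8 g R = (\<lambda>_ _ _ _. 0)"
proof -
  have Lam_zero: "Lam (\<lambda>x y. Ric g R x y + Ric_star g R x y) = (\<lambda>_ _. 0)"
    unfolding Lam_def using Ric_plus_Ric_star_symmetric[OF assms] by (simp add: fun_eq_iff)
  have "R x y z w - psi R x y z w - mu R x y z w = 0" for x y z w
    using psi_plus_mu_eq[OF assms(3,4), of x y z w] by simp
  then show ?thesis
    unfolding pi8_def Let_def Lam_zero by (simp add: fun_eq_iff dotp_def wedge_def)
qed

theorem lemma4p9:
  fixes g :: "real^'n^'n" and R :: "('n::finite) tensor4"
  assumes "CARD('n) \<ge> 3"
    and "transpose g = g" and "invertible g"
    and "in_r R" and "in_r (conj4 R)"
  shows "pi8 g R = (\<lambda>_ _ _ _. 0) \<and> pi8 g (conj4 R) = (\<lambda>_ _ _ _. 0)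
         \<and> (sym_bform (Ric g R) \<longleftrightarrow> sym_bform (Ric_star g R))"
proof (intro conjI)
  show "pi8 g R = (\<lambda>_ _ _ _. 0)"
    using pi8_eq_zero[OF assms(2-5)] .
  show "pi8 g (conj4 R) = (\<lambda>_ _ _ _. 0)"
    using pi8_eq_zero[OF assms(2,3,5)] assms(4) by simp
  show "sym_bform (Ric g R) \<longleftrightarrow> sym_bform (Ric_star g R)"
    unfolding sym_bform_def
    using Ric_plus_Ric_star_symmetric[OF assms(2-5)] by (smt (verit))
qed

end
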